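(* For all $a,b>0$ and $0\le v\le 1$, with $\mu:=\min\{1-v,v\}$, $$G(a,b)\le Hz_v(a,b)\le \left\{1+\frac{\mu^2}{2}\left(\log a-\log b\right)^2\right\}Hz_v(a,b)\le A(a,b).$$
   Context: For $a,b>0$: $A(a,b):=\frac{a+b}{2}$, $G(a,b):=\sqrt{ab}$, and for $0\le v\le 1$ the Heinz mean is $Hz_v(a,b):=\frac{a^{1-v}b^v+a^{v}b^{1-v}}{2}$. *)

theory Defs
  imports Complex_Main
begin

definition AM :: "real \<Rightarrow> real \<Rightarrow> real" where
  "AM a b = (a + b) / 2"

definition GM :: "real \<Rightarrow> real \<Rightarrow> real" where
  "GM a b = sqrt (a * b)"

definition Hz :: "real \<Rightarrow> real \<Rightarrow> real \<Rightarrow> real" where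
  "Hz v a b = (a powr (1 - v) * b powr v + a powr v * b powr (1 - v)) / 2"

end

theory Submission
  imports Defs
begin

text \<open>In logarithmic coordinates \<open>a = e\<^sup>m\<^sup>+\<^sup>d\<close>, \<open>b = e\<^sup>m\<^sup>-\<^sup>d\<close> the three means become
  \<open>G = e\<^sup>m\<close>, \<open>Hz\<^sub>v = e\<^sup>m cosh ((1 - 2v) d)\<close> and \<open>A = e\<^sup>m cosh d\<close>.
  Put \<open>p = \<bar>1 - 2v\<bar>\<close> and \<open>q = 2\<mu>\<close>, so that \<open>p + q = 1\<close>. The addition formula gives
  \<open>cosh d = cosh (pd) cosh (qd) + sinh (pd) sinh (qd)\<close>; the second summand is nonnegative and
  \<open>cosh (qd) \<ge> 1 + (qd)\<^sup>2/2\<close>, where \<open>(qd)\<^sup>2 = \<mu>\<^sup>2 (ln a - ln b)\<^sup>2\<close>.\<close>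

lemma one_plus_square_half_le_cosh: "1 + x\<^sup>2 / 2 \<le> cosh (x::real)"
proof -
  have cosh_eq: "cosh x = 1 + 2 * (sinh (x/2))\<^sup>2"
    using cosh_double[of "x/2"] cosh_square_eq[of "x/2"] by simp
  have "\<bar>x/2\<bar> \<le> \<bar>sinh (x/2)\<bar>"
    using real_le_abs_sinh[of "x/2"] by (simp add: sinh_field_def exp_minus)
  then have "(x/2)\<^sup>2 \<le> (sinh (x/2))\<^sup>2"
    by (metis abs_le_square_iff)
  then show ?thesis
    using cosh_eq by (simp add: power_divide)
qed

lemma sinh_mult_sinh_nonneg:
  fixes p q d :: real
  assumes "0 \<le> p" "0 \<le> q"
  shows "0 \<le> sinh (p * d) * sinh (q * d)"
  using assms by (cases "0 \<le> d") (auto intro!: mult_nonpos_nonpos simp: mult_nonneg_nonpos)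

lemma cosh_mult_le_cosh_add_mult:
  fixes p q d :: real
  assumes "0 \<le> p" "0 \<le> q"
  shows "(1 + (q * d)\<^sup>2 / 2) * cosh (p * d) \<le> cosh ((p + q) * d)"
proof -
  have "(1 + (q * d)\<^sup>2 / 2) * cosh (p * d) \<le> cosh (q * d) * cosh (p * d)"
    using one_plus_square_half_le_cosh[of "q * d"] by (simp add: mult_right_mono)
  also have "\<dots> \<le> cosh (p * d) * cosh (q * d) + sinh (p * d) * sinh (q * d)"
    using sinh_mult_sinh_nonneg[OF assms, of d] by simp
  also have "\<dots> = cosh ((p + q) * d)"
    by (simp add: cosh_add distrib_right)
  finally show ?thesis .
qed

lemma cosh_heinz_le_cosh:
  fixes v d :: real
  assumes "0 \<le> v" "v \<le> 1"
  shows "(1 + (2 * min (1 - v) v * d)\<^sup>2 / 2) * cosh ((1 - 2 * v) * d) \<le> cosh d"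
proof -
  define p where "p = \<bar>1 - 2 * v\<bar>"
  define q where "q = 2 * min (1 - v) v"
  have "0 \<le> p" "0 \<le> q" "p + q = 1"
    using assms by (auto simp: p_def q_def abs_if min_def)
  moreover have "cosh ((1 - 2 * v) * d) = cosh (p * d)"
    by (simp only: cosh_real_eq_iff) (simp add: p_def abs_mult)
  ultimately show ?thesis
    using cosh_mult_le_cosh_add_mult[of p q d] by (simp only: q_def[symmetric]) simp
qed

lemma GM_exp_add_exp_diff: "GM (exp (m + d)) (exp (m - d)) = exp m"
proof -
  have "exp (m + d) * exp (m - d) = exp m * exp m"
    by (simp add: exp_add[symmetric])
  then show ?thesis
    by (simp add: GM_def)
qed

lemma AM_exp_add_exp_diff: "AM (exp (m + d)) (exp (m - d)) = exp m * cosh d"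
  by (simp add: AM_def cosh_field_def exp_add exp_diff exp_minus field_simps)

lemma Hz_exp_add_exp_diff:
  "Hz v (exp (m + d)) (exp (m - d)) = exp m * cosh ((1 - 2 * v) * d)"
proof -
  have "exp (m + d) powr (1 - v) * exp (m - d) powr v = exp (m + (1 - 2 * v) * d)"
    "exp (m + d) powr v * exp (m - d) powr (1 - v) = exp (m - (1 - 2 * v) * d)"
    by (simp_all add: powr_def exp_add[symmetric] algebra_simps)
  then show ?thesis
    by (simp add: Hz_def cosh_field_def exp_add exp_diff exp_minus field_simps)
qed

theorem corollary2p4:
  fixes a b v :: real
  assumes "a > 0" and "b > 0" and "0 \<le> v" and "v \<le> 1"
  defines "\<mu> \<equiv> min (1 - v) v"
  shows "GM a b \<le> Hz v a b
    \<and> Hz v a b \<le> (1 + \<mu>\<^sup>2 / 2 * (ln a - ln b)\<^sup>2) * Hz v a b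
    \<and> (1 + \<mu>\<^sup>2 / 2 * (ln a - ln b)\<^sup>2) * Hz v a b \<le> AM a b"
proof -
  define m where "m = (ln a + ln b) / 2"
  define d where "d = (ln a - ln b) / 2"
  have "m + d = ln a" "m - d = ln b"
    by (simp_all add: m_def d_def field_simps)
  then have ab: "a = exp (m + d)" "b = exp (m - d)"
    using assms(1,2) by simp_all
  have GM: "GM a b = exp m" and AM: "AM a b = exp m * cosh d"
    and Hz: "Hz v a b = exp m * cosh ((1 - 2 * v) * d)"
    by (simp_all only: ab GM_exp_add_exp_diff AM_exp_add_exp_diff Hz_exp_add_exp_diff)
  have factor: "1 + \<mu>\<^sup>2 / 2 * (ln a - ln b)\<^sup>2 = 1 + (2 * min (1 - v) v * d)\<^sup>2 / 2"
    unfolding d_def \<mu>_def by (simp add: power_mult_distrib power_divide)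
  have "GM a b \<le> Hz v a b"
    using cosh_real_ge_1 by (simp add: GM Hz)
  moreover have "Hz v a b \<le> (1 + \<mu>\<^sup>2 / 2 * (ln a - ln b)\<^sup>2) * Hz v a b"
    using cosh_real_nonneg by (simp add: Hz distrib_right)
  moreover have "(1 + \<mu>\<^sup>2 / 2 * (ln a - ln b)\<^sup>2) * Hz v a b \<le> AM a b"
    using mult_left_mono[OF cosh_heinz_le_cosh[OF assms(3,4), of d], of "exp m"]
    unfolding factor Hz AM by (simp add: mult.left_commute)
  ultimately show ?thesis
    by blast
qed

end
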